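(* Let $i$ be a positive integer. Then $\mathcal P_i(s)$ is a nonzero polynomial of degree at most $3i-3$, and $\mathcal Q_i(s)$ is a nonzero polynomial of degree $3i-2$.
   Context: Let $\mathbb F$ be a field of characteristic different from $3$ containing a primitive cube root of unity $\zeta_3$. For $i\in\mathbb Z$ define the rational functions in $\mathbb F(s)$ $$\mathcal P_i(s)=\frac{(s+\zeta_3)^{3i}-(s+\zeta_3^2)^{3i}}{3(\zeta_3-\zeta_3^2)s(s-1)},\qquad \mathcal Q_i(s)=\frac{\frac{1-\zeta_3}{3}(s+\zeta_3)^{3i-1}+\frac{1-\zeta_3^2}{3}(s+\zeta_3^2)^{3i-1}}{s-1}.$$ *)

theory Defs
  imports "HOL-Computational_Algebra.Polynomial" "HOL-Computational_Algebra.Fraction_Field"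
begin

text \<open>The rational function field F(s) is modelled as the fraction field of F[s].\<close>

definition poly_to_ratfun :: "'a::field poly \<Rightarrow> 'a poly fract" where
  "poly_to_ratfun p = Fract p 1"

definition rs :: "'a::field poly fract" where
  "rs = poly_to_ratfun [:0, 1:]"

definition rc :: "'a::field \<Rightarrow> 'a poly fract" where
  "rc c = poly_to_ratfun [:c:]"

definition calP :: "'a::field \<Rightarrow> int \<Rightarrow> 'a poly fract" where
  "calP z i = ((rs + rc z) powi (3 * i) - (rs + rc (z^2)) powi (3 * i)) /
              (rc (3 * (z - z^2)) * rs * (rs - 1))"

definition calQ :: "'a::field \<Rightarrow> int \<Rightarrow> 'a poly fract" where
  "calQ z i = (rc ((1 - z) / 3) * (rs + rc z) powi (3 * i - 1)
             + rc ((1 - z^2) / 3) * (rs + rc (z^2)) powi (3 * i - 1)) / (rs - 1)"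

end

theory Submission
  imports Defs
begin

text \<open>Write \<open>w = \<zeta>\<^sub>3\<^sup>2\<close>, so that \<open>\<zeta>\<^sub>3 + w = -1\<close>, \<open>1 + \<zeta>\<^sub>3 = -w\<close> and \<open>1 + w = -\<zeta>\<^sub>3\<close>.
  The numerator \<open>(s + \<zeta>\<^sub>3)\<^sup>n - (s + w)\<^sup>n\<close> of \<open>\<P>\<^sub>i\<close>, with \<open>n = 3i\<close>, has degree below \<open>n\<close>
  because the leading terms cancel; it vanishes at \<open>s = 0\<close> and \<open>s = 1\<close> because \<open>3 | n\<close>,
  and it is nonzero at \<open>s = -\<zeta>\<^sub>3\<close>. So \<open>s(s - 1)\<close> divides it, leaving a nonzero polynomial
  of degree at most \<open>n - 3\<close>. The numerator of \<open>\<Q>\<^sub>i\<close> has leading coefficient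
  \<open>(1 - \<zeta>\<^sub>3)/3 + (1 - w)/3 = 1\<close> in degree \<open>3i - 1\<close>, and at \<open>s = 1\<close> it equals
  \<open>\<plusminus>((1 - \<zeta>\<^sub>3)\<zeta>\<^sub>3 + (1 - w)w)/3 = 0\<close>, so dividing by \<open>s - 1\<close> leaves a polynomial of degree exactly \<open>3i - 2\<close>.\<close>

lemma poly_to_ratfun_add: "poly_to_ratfun (p + q) = poly_to_ratfun p + poly_to_ratfun q"
  by (simp add: poly_to_ratfun_def)

lemma poly_to_ratfun_diff: "poly_to_ratfun (p - q) = poly_to_ratfun p - poly_to_ratfun q"
  by (simp add: poly_to_ratfun_def)

lemma poly_to_ratfun_mult: "poly_to_ratfun (p * q) = poly_to_ratfun p * poly_to_ratfun q"
  by (simp add: poly_to_ratfun_def)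

lemma poly_to_ratfun_1: "poly_to_ratfun 1 = 1"
  by (simp add: poly_to_ratfun_def One_fract_def)

lemma poly_to_ratfun_power: "poly_to_ratfun (p ^ n) = poly_to_ratfun p ^ n"
  by (induction n) (simp_all add: poly_to_ratfun_mult poly_to_ratfun_1)

lemma poly_to_ratfun_eq_0_iff: "poly_to_ratfun p = 0 \<longleftrightarrow> p = 0"
  by (simp add: poly_to_ratfun_def Zero_fract_def eq_fract)

lemma poly_to_ratfun_mult_divide_cancel_left:
  "d \<noteq> 0 \<Longrightarrow> poly_to_ratfun (d * q) / poly_to_ratfun d = poly_to_ratfun q"
  by (simp add: poly_to_ratfun_mult poly_to_ratfun_eq_0_iff)

lemma rs_plus_rc: "rs + rc c = poly_to_ratfun [:c, 1:]"
  by (simp add: rs_def rc_def flip: poly_to_ratfun_add)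

lemma rs_minus_1: "rs - 1 = poly_to_ratfun [:-1, 1:]"
  by (simp add: rs_def one_pCons flip: poly_to_ratfun_1 poly_to_ratfun_diff)

lemma rc_mult: "rc c * poly_to_ratfun p = poly_to_ratfun (smult c p)"
  by (simp add: rc_def flip: poly_to_ratfun_mult)

lemma calP_eq_poly_quotient:
  "calP z (int k) = poly_to_ratfun ([:z, 1:] ^ (3 * k) - [:z^2, 1:] ^ (3 * k))
     / poly_to_ratfun (smult (3 * (z - z^2)) ([:0, 1:] * [:-1, 1:]))"
proof -
  have "3 * int k = int (3 * k)" by simp
  moreover have "rc (3 * (z - z^2)) * rs * (rs - 1)
      = poly_to_ratfun (smult (3 * (z - z^2)) ([:0, 1:] * [:-1, 1:]))"
    unfolding rs_minus_1 by (simp add: rs_def rc_mult mult.assoc flip: poly_to_ratfun_mult)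
  ultimately show ?thesis
    unfolding calP_def
    by (simp only: power_int_of_nat rs_plus_rc flip: poly_to_ratfun_power poly_to_ratfun_diff)
qed

lemma calQ_eq_poly_quotient:
  "calQ z (int (Suc k)) = poly_to_ratfun
       (smult ((1 - z) / 3) ([:z, 1:] ^ (3 * k + 2)) + smult ((1 - z^2) / 3) ([:z^2, 1:] ^ (3 * k + 2)))
     / poly_to_ratfun [:-1, 1:]"
proof -
  have "3 * int (Suc k) - 1 = int (3 * k + 2)" by simp
  then show ?thesis
    unfolding calQ_def
    by (simp only: power_int_of_nat rs_plus_rc rs_minus_1 rc_mult
        flip: poly_to_ratfun_power poly_to_ratfun_add)
qed

lemma primitive_cube_root_of_unity:
  fixes z :: "'a::idom"
  assumes "z ^ 3 = 1" "z \<noteq> 1"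
  shows "z^2 + z + 1 = 0" "z + 1 = - (z^2)" "z^2 + 1 = - z" "(z^2)^2 = z" "z^2 \<noteq> z"
proof -
  have "(z - 1) * (z^2 + z + 1) = 0"
    using assms(1) by (simp add: algebra_simps power2_eq_square power3_eq_cube)
  then show "z^2 + z + 1 = 0" using assms(2) by simp
  then show "z + 1 = - (z^2)" "z^2 + 1 = - z"
    by (simp_all add: eq_neg_iff_add_eq_0 algebra_simps)
  have "(z^2)^2 = z^3 * z" by (simp flip: power_mult power_Suc2)
  then show "(z^2)^2 = z" using assms(1) by simp
  have "z \<noteq> 0" using assms(1) by auto
  then show "z^2 \<noteq> z"
    using assms(2) by (simp add: power2_eq_square)
qed

lemma degree_linear_power_diff_less:
  fixes a b :: "'a::comm_ring_1"
  assumes "n > 0"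
  shows "degree ([:a, 1:] ^ n - [:b, 1:] ^ n) < n"
proof -
  have "degree ([:a, 1:] ^ n - [:b, 1:] ^ n) \<le> n - 1"
  proof (rule degree_le, intro allI impI)
    fix t assume "n - 1 < t"
    then have "t = n \<or> n < t" by auto
    then show "coeff ([:a, 1:] ^ n - [:b, 1:] ^ n) t = 0"
      by (auto simp: coeff_linear_power coeff_eq_0 degree_linear_power)
  qed
  with assms show ?thesis by simp
qed

lemma linear_power_diff_nonzero:
  fixes a b :: "'a::idom"
  assumes "a \<noteq> b" "n > 0"
  shows "[:a, 1:] ^ n - [:b, 1:] ^ n \<noteq> 0"
proof
  assume "[:a, 1:] ^ n - [:b, 1:] ^ n = 0"
  then have "poly ([:a, 1:] ^ n - [:b, 1:] ^ n) (- a) = 0" by simp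
  with assms show False by (simp add: zero_power)
qed

lemma degree_smult_linear_power_add:
  fixes a b :: "'a::comm_ring_1"
  assumes "a + b \<noteq> 0"
  shows "degree (smult a ([:c, 1:] ^ n) + smult b ([:d, 1:] ^ n)) = n"
proof (rule antisym)
  show "degree (smult a ([:c, 1:] ^ n) + smult b ([:d, 1:] ^ n)) \<le> n"
    by (intro degree_add_le order.trans[OF degree_smult_le]) (simp_all add: degree_linear_power)
  show "n \<le> degree (smult a ([:c, 1:] ^ n) + smult b ([:d, 1:] ^ n))"
    using assms by (intro le_degree) (simp add: coeff_linear_power)
qed

lemma poly_0_1_eq_0_imp_dvd:
  fixes p :: "'a::idom poly"
  assumes "poly p 0 = 0" "poly p 1 = 0"
  shows "[:0, 1:] * [:-1, 1:] dvd p"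
proof -
  obtain r where r: "p = [:0, 1:] * r"
    using assms(1) by (metis poly_eq_0_iff_dvd dvdE minus_zero)
  then have "[:-1, 1:] dvd r"
    using assms(2) by (simp add: poly_eq_0_iff_dvd[symmetric])
  then show ?thesis
    unfolding r by (rule mult_dvd_mono[OF dvd_refl])
qed

lemma calP_is_polynomial:
  fixes z :: "'a::field"
  assumes "(3::'a) \<noteq> 0" "z ^ 3 = 1" "z \<noteq> 1"
  shows "\<exists>p. p \<noteq> 0 \<and> degree p \<le> 3 * k \<and> calP z (int (Suc k)) = poly_to_ratfun p"
proof -
  define n where "n = 3 * Suc k"
  define N where "N = [:z, 1:] ^ n - [:z^2, 1:] ^ n"
  define c where "c = 3 * (z - z^2)"
  note roots = primitive_cube_root_of_unity[OF assms(2,3)]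
  have c: "c \<noteq> 0"
    using assms(1) roots(5) by (simp add: c_def)
  have "z ^ n = 1"
    unfolding n_def power_mult assms(2) by simp
  moreover have "(z^2) ^ n = (z ^ n)^2"
    by (simp only: mult.commute flip: power_mult)
  ultimately have zn: "z ^ n = 1" "(z^2) ^ n = 1"
    by simp_all
  have "poly N 0 = 0"
    using zn by (simp add: N_def)
  moreover have "poly N 1 = 0"
  proof -
    have "poly N 1 = (- (z^2)) ^ n - (- z) ^ n"
      using roots(2,3) by (simp add: N_def)
    also have "\<dots> = 0"
      by (simp only: power_minus[of "z^2"] power_minus[of z] zn diff_self)
    finally show ?thesis .
  qed
  ultimately obtain r where r: "N = ([:0, 1:] * [:-1, 1:]) * r"
    using poly_0_1_eq_0_imp_dvd by blast
  have "N \<noteq> 0"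
    using linear_power_diff_nonzero[OF roots(5)[symmetric]] by (simp add: N_def n_def)
  then have "r \<noteq> 0" using r by auto
  have "degree N < n"
    unfolding N_def by (rule degree_linear_power_diff_less) (simp add: n_def)
  moreover have "degree N = 2 + degree r"
  proof -
    have "degree ([:0, 1:] * [:-1, 1::'a:]) = 2"
      by simp
    then show ?thesis
      using \<open>r \<noteq> 0\<close> unfolding r by (subst degree_mult_eq) auto
  qed
  ultimately have "degree r \<le> 3 * k"
    by (simp add: n_def)
  define D where "D = smult c ([:0, 1:] * [:-1, 1:])"
  have "N = D * smult (inverse c) r"
    unfolding r D_def mult_smult_left mult_smult_right smult_smult using c by simp
  have "calP z (int (Suc k)) = poly_to_ratfun N / poly_to_ratfun D"
    unfolding N_def n_def D_def c_def by (rule calP_eq_poly_quotient)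
  also have "\<dots> = poly_to_ratfun (smult (inverse c) r)"
    unfolding \<open>N = D * smult (inverse c) r\<close>
    by (rule poly_to_ratfun_mult_divide_cancel_left) (simp add: D_def c)
  finally show ?thesis
    using \<open>r \<noteq> 0\<close> \<open>degree r \<le> 3 * k\<close> c by (intro exI[of _ "smult (inverse c) r"]) simp
qed

lemma calQ_is_polynomial:
  fixes z :: "'a::field"
  assumes "(3::'a) \<noteq> 0" "z ^ 3 = 1" "z \<noteq> 1"
  shows "\<exists>q. q \<noteq> 0 \<and> degree q = 3 * k + 1 \<and> calQ z (int (Suc k)) = poly_to_ratfun q"
proof -
  define m where "m = 3 * k + 2"
  define a where "a = (1 - z) / 3"
  define b where "b = (1 - z^2) / 3"
  define M where "M = smult a ([:z, 1:] ^ m) + smult b ([:z^2, 1:] ^ m)"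
  note roots = primitive_cube_root_of_unity[OF assms(2,3)]
  have "a + b = ((1 - z) + (1 - z^2)) / 3"
    unfolding a_def b_def by (rule add_divide_distrib[symmetric])
  also have "(1 - z) + (1 - z^2) = 3 - (z^2 + z + 1)"
    by (simp add: algebra_simps)
  finally have "a + b = 1"
    using assms(1) roots(1) by simp
  then have "degree M = m"
    unfolding M_def by (intro degree_smult_linear_power_add) simp
  have zm: "z ^ m = z^2"
    unfolding m_def power_add power_mult assms(2) by simp
  have "(z^2) ^ m = (z ^ m)^2"
    by (simp only: mult.commute flip: power_mult)
  with zm roots(4) have z2m: "(z^2) ^ m = z"
    by simp
  have "poly M 1 = a * (- (z^2)) ^ m + b * (- z) ^ m"
    using roots(2,3) by (simp add: M_def)
  also have "\<dots> = (-1) ^ m * ((1 - z) * z + (1 - z^2) * z^2) / 3"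
    unfolding power_minus[of "z^2"] power_minus[of z] zm z2m a_def b_def
    by (simp only: times_divide_eq_left times_divide_eq_right add_divide_distrib[symmetric])
      (simp add: algebra_simps)
  also have "(1 - z) * z + (1 - z^2) * z^2 = z - (z^2)^2"
    by (simp add: algebra_simps power2_eq_square)
  also have "\<dots> = 0"
    using roots(4) by simp
  finally have "poly M 1 = 0"
    by simp
  then obtain q where q: "M = [:-1, 1:] * q"
    by (metis poly_eq_0_iff_dvd dvdE)
  have "M \<noteq> 0"
    using \<open>degree M = m\<close> by (auto simp: m_def)
  then have "q \<noteq> 0"
    using q by auto
  have "degree M = 1 + degree q"
    using \<open>q \<noteq> 0\<close> unfolding q by (subst degree_mult_eq) auto
  then have "degree q = 3 * k + 1"
    using \<open>degree M = m\<close> by (simp add: m_def)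
  moreover have "calQ z (int (Suc k)) = poly_to_ratfun q"
  proof -
    have "calQ z (int (Suc k)) = poly_to_ratfun M / poly_to_ratfun [:-1, 1:]"
      unfolding M_def m_def a_def b_def by (rule calQ_eq_poly_quotient)
    also have "\<dots> = poly_to_ratfun q"
      unfolding q by (rule poly_to_ratfun_mult_divide_cancel_left) simp
    finally show ?thesis .
  qed
  ultimately show ?thesis
    using \<open>q \<noteq> 0\<close> by blast
qed

theorem lemma3p3:
  fixes z :: "'a::field" and i :: int
  assumes char3: "(3::'a) \<noteq> 0"
    and prim: "z ^ 3 = 1" "z \<noteq> 1"
    and ipos: "i > 0"
  shows "(\<exists>p. p \<noteq> 0 \<and> degree p \<le> nat (3 * i - 3) \<and> calP z i = poly_to_ratfun p)
       \<and> (\<exists>q. q \<noteq> 0 \<and> degree q = nat (3 * i - 2) \<and> calQ z i = poly_to_ratfun q)"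
proof -
  define k where "k = nat (i - 1)"
  have i: "i = int (Suc k)"
    using ipos by (simp add: k_def)
  then have "nat (3 * i - 3) = 3 * k" "nat (3 * i - 2) = 3 * k + 1"
    by simp_all
  then show ?thesis
    using calP_is_polynomial[OF char3 prim] calQ_is_polynomial[OF char3 prim] i by simp
qed

end
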